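(* Let $k$ be a field with $w:=\operatorname{char}k$, $X$ a normal $k$-variety, $U=\operatorname{Spec}B\subset X$ an affine open subset, and $V$ a prime divisor with $V\cap U=\operatorname{div}(g)$ for some $g\in B$. Let $D$ be a $\mathbb{Q}$-divisor with $D|_U=\frac pq (V\cap U)$, $p,q$ coprime, $q>0$; let $d\in\mathbb{Z}$ and $s:=\lfloor pd/q\rfloor$. Then with $\varphi_U(f)=fT^d\cdot T\partial_T$ and $\psi_U(\delta)=\sigma_\delta$ there are short exact sequences of $\mathcal{O}_U$-modules as follows. If $pd\equiv-1\pmod q$ and $w\nmid q$: $0\to\mathcal{O}_U(sV)\xrightarrow{\varphi_U}(\pi_*\Theta_C)_d|_U\xrightarrow{\psi_U}\Theta_U(sV)\to0$. If $pd\equiv-1\pmod q$ and $w\mid q$: $0\to\mathcal{O}_U(sV+V)\xrightarrow{\varphi_U}(\pi_*\Theta_C)_d|_U\xrightarrow{\psi_U}\mathcal{D}er_U(-\log V)(sV)\to0$. Otherwise: $0\to\mathcal{O}_U(sV)\xrightarrow{\varphi_U}(\pi_*\Theta_C)_d|_U\xrightarrow{\psi_U}\mathcal{D}er_U(-\log V)(sV)\to0$.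
   Context: For integers, "$w\mid q$" means $q\in w\mathbb{Z}$ (never true when $w=0$). For a $\mathbb{Q}$-divisor $S$, $\mathcal{O}_X(S):=\mathcal{O}_X(\lfloor S\rfloor)$. $T$ is an indeterminate, $\mathcal{A}:=\bigoplus_{i\in\mathbb{Z}}\mathcal{O}_X(iD)T^i$ (on $U$ this is $\bigoplus_iBg^{-\lfloor pi/q\rfloor}T^i$), $\pi:C=\operatorname{Spec}_X\mathcal{A}\to X$, $\Theta_C=\mathcal{D}er_k(\mathcal{O}_C)$, and $(\pi_*\Theta_C)_d$ is the sheaf of $k$-derivations of $\mathcal{A}$ mapping $\mathcal{O}_X(iD)T^i$ into $\mathcal{O}_X((i+d)D)T^{i+d}$. Each such $\delta$ extends to $K(X)(T)$ and $T^{-d}\delta=\sigma_\delta+\alpha_\delta T\partial_T$ uniquely with $\alpha_\delta\in K(X)$, $\sigma_\delta$ a $k$-derivation of $K(X)$ (with $\sigma_\delta(T)=0$). $\Theta_U(sV)=\mathcal{D}er_k(\mathcal{O}_U)\otimes\mathcal{O}_U(sV)$ and $\mathcal{D}er_U(-\log V)(sV)=\mathcal{D}er_U(-\log V)\otimes\mathcal{O}_U(sV)$, where $\mathcal{D}er_U(-\log V)$ is the sheaf of $k$-derivations $\theta$ of $\mathcal{O}_U$ with $\theta(g\mathcal{O}_U)\subset g\mathcal{O}_U$. *)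

theory Defs
  imports "HOL-Computational_Algebra.Polynomial"
begin

text \<open>The function field K(X) is the ambient field type 'a; k is a subfield kk,
  B is the coordinate ring of U (a subring of 'a with fraction field 'a).\<close>

definition is_subfield :: "'a::field set \<Rightarrow> bool" where
  "is_subfield F \<longleftrightarrow> 0 \<in> F \<and> 1 \<in> F \<and>
     (\<forall>x\<in>F. \<forall>y\<in>F. x + y \<in> F \<and> x * y \<in> F \<and> - x \<in> F) \<and>
     (\<forall>x\<in>F. x \<noteq> 0 \<longrightarrow> inverse x \<in> F)"

definition is_subring :: "'a::field set \<Rightarrow> bool" where
  "is_subring R \<longleftrightarrow> 0 \<in> R \<and> 1 \<in> R \<and>
     (\<forall>x\<in>R. \<forall>y\<in>R. x + y \<in> R \<and> x * y \<in> R \<and> - x \<in> R)"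

inductive_set alg_gen :: "'a::field set \<Rightarrow> 'a set \<Rightarrow> 'a set" for F S where
  base: "x \<in> F \<Longrightarrow> x \<in> alg_gen F S"
| gen: "x \<in> S \<Longrightarrow> x \<in> alg_gen F S"
| add: "x \<in> alg_gen F S \<Longrightarrow> y \<in> alg_gen F S \<Longrightarrow> x + y \<in> alg_gen F S"
| mult: "x \<in> alg_gen F S \<Longrightarrow> y \<in> alg_gen F S \<Longrightarrow> x * y \<in> alg_gen F S"
| neg: "x \<in> alg_gen F S \<Longrightarrow> - x \<in> alg_gen F S"

text \<open>U = Spec B is an affine open of a normal k-variety with function field 'a:
  B is a finitely generated k-algebra, a domain with fraction field 'a, integrally closed.\<close>
definition normal_affine_chart :: "'a::field set \<Rightarrow> 'a set \<Rightarrow> bool" where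
  "normal_affine_chart kk B \<longleftrightarrow>
     is_subfield kk \<and> is_subring B \<and> kk \<subseteq> B \<and>
     (\<exists>S. finite S \<and> S \<subseteq> B \<and> B = alg_gen kk S) \<and>
     (\<forall>x. \<exists>a\<in>B. \<exists>b\<in>B. b \<noteq> 0 \<and> x = a / b) \<and>
     (\<forall>x. (\<exists>P. lead_coeff P = 1 \<and> (\<forall>i. coeff P i \<in> B) \<and> poly P x = 0) \<longrightarrow> x \<in> B)"

text \<open>div(g) = V \<inter> U for a prime divisor V (in the normal domain B): g B is a prime ideal
  (or, if V does not meet U, g is a unit).\<close>
definition div_is_prime_divisor :: "'a::field set \<Rightarrow> 'a \<Rightarrow> bool" where
  "div_is_prime_divisor B g \<longleftrightarrow> g \<in> B \<and> g \<noteq> 0 \<and>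
     ((\<exists>u\<in>B. g * u = 1) \<or>
      ((\<nexists>u. u \<in> B \<and> g * u = 1) \<and>
       (\<forall>a\<in>B. \<forall>b\<in>B. (\<exists>c\<in>B. a * b = g * c) \<longrightarrow> (\<exists>c\<in>B. a = g * c) \<or> (\<exists>c\<in>B. b = g * c))))"

text \<open>Sections of O_U(mV) = g^(-m) B.\<close>
definition Osec :: "'a::field set \<Rightarrow> 'a \<Rightarrow> int \<Rightarrow> 'a set" where
  "Osec B g m = {x. x * g powi m \<in> B}"

definition flr :: "int \<Rightarrow> int \<Rightarrow> int \<Rightarrow> int" where
  "flr p q i = \<lfloor>(of_int (p * i) / of_int q :: rat)\<rfloor>"

text \<open>Elements of K(X)[T,T^-1] as finitely supported coefficient functions.\<close>
definition lsingle :: "int \<Rightarrow> 'a::field \<Rightarrow> int \<Rightarrow> 'a" where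
  "lsingle i x = (\<lambda>n. if n = i then x else 0)"

definition lmul :: "(int \<Rightarrow> 'a::field) \<Rightarrow> (int \<Rightarrow> 'a) \<Rightarrow> int \<Rightarrow> 'a" where
  "lmul a b = (\<lambda>n. \<Sum>i\<in>{i. a i \<noteq> 0}. a i * b (n - i))"

text \<open>A on U: the graded ring \<Oplus>_i B g^(-floor(p i/q)) T^i.\<close>
definition AU :: "'a::field set \<Rightarrow> 'a \<Rightarrow> int \<Rightarrow> int \<Rightarrow> (int \<Rightarrow> 'a) set" where
  "AU B g p q = {a. finite {i. a i \<noteq> 0} \<and> (\<forall>i. a i \<in> Osec B g (flr p q i))}"

text \<open>(\<pi>_* \<Theta>_C)_d (U): degree-d k-derivations of A_U (extended by 0 outside A_U).\<close>
definition DerA :: "'a::field set \<Rightarrow> 'a set \<Rightarrow> 'a \<Rightarrow> int \<Rightarrow> int \<Rightarrow> int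
     \<Rightarrow> ((int \<Rightarrow> 'a) \<Rightarrow> (int \<Rightarrow> 'a)) set" where
  "DerA kk B g p q d = {\<delta>. (\<forall>a. a \<notin> AU B g p q \<longrightarrow> \<delta> a = (\<lambda>_. 0)) \<and>
      (\<forall>a\<in>AU B g p q. \<delta> a \<in> AU B g p q) \<and>
      (\<forall>a\<in>AU B g p q. \<forall>b\<in>AU B g p q. \<delta> (\<lambda>n. a n + b n) = (\<lambda>n. \<delta> a n + \<delta> b n) \<and>
           \<delta> (lmul a b) = (\<lambda>n. lmul a (\<delta> b) n + lmul (\<delta> a) b n)) \<and>
      (\<forall>c\<in>kk. \<forall>a\<in>AU B g p q. \<delta> (\<lambda>n. c * a n) = (\<lambda>n. c * \<delta> a n)) \<and>
      (\<forall>i x. lsingle i x \<in> AU B g p q \<longrightarrow> (\<forall>n. n \<noteq> i + d \<longrightarrow> \<delta> (lsingle i x) n = 0))}"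

text \<open>Der_k(O_U)(U) and Der_U(-log V)(U), as maps 'a \<Rightarrow> 'a extended by 0 outside B.\<close>
definition DerB :: "'a::field set \<Rightarrow> 'a set \<Rightarrow> ('a \<Rightarrow> 'a) set" where
  "DerB kk B = {\<theta>. (\<forall>x. x \<notin> B \<longrightarrow> \<theta> x = 0) \<and> (\<forall>x\<in>B. \<theta> x \<in> B) \<and>
      (\<forall>x\<in>B. \<forall>y\<in>B. \<theta> (x + y) = \<theta> x + \<theta> y \<and> \<theta> (x * y) = x * \<theta> y + \<theta> x * y) \<and>
      (\<forall>c\<in>kk. \<forall>x\<in>B. \<theta> (c * x) = c * \<theta> x)}"

definition DerLogB :: "'a::field set \<Rightarrow> 'a set \<Rightarrow> 'a \<Rightarrow> ('a \<Rightarrow> 'a) set" where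
  "DerLogB kk B g = {\<theta>\<in>DerB kk B. \<forall>x\<in>B. \<exists>c\<in>B. \<theta> (g * x) = g * c}"

text \<open>Twist by O_U(sV) = g^(-s) O_U (a free O_U-module with generator g^(-s)).\<close>
definition twist :: "'a::field \<Rightarrow> int \<Rightarrow> ('a \<Rightarrow> 'a) set \<Rightarrow> ('a \<Rightarrow> 'a) set" where
  "twist g s M = (\<lambda>\<theta> x. g powi (- s) * \<theta> x) ` M"

text \<open>\<phi>_U(f) = f T^d \<cdot> T \<partial>_T and \<psi>_U(\<delta>) = \<sigma>_\<delta> (restricted to B; it determines \<sigma>_\<delta>).\<close>
definition phiU :: "'a::field set \<Rightarrow> 'a \<Rightarrow> int \<Rightarrow> int \<Rightarrow> int \<Rightarrow> 'a \<Rightarrow> (int \<Rightarrow> 'a) \<Rightarrow> int \<Rightarrow> 'a" where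
  "phiU B g p q d f = (\<lambda>a. if a \<in> AU B g p q then (\<lambda>n. f * of_int (n - d) * a (n - d))
                            else (\<lambda>_. 0))"

definition psiU :: "'a::field set \<Rightarrow> int \<Rightarrow> ((int \<Rightarrow> 'a) \<Rightarrow> (int \<Rightarrow> 'a)) \<Rightarrow> 'a \<Rightarrow> 'a" where
  "psiU B d \<delta> = (\<lambda>b. if b \<in> B then \<delta> (lsingle 0 b) d else 0)"

definition short_exact :: "'a::field set \<Rightarrow> 'a set \<Rightarrow> ((int \<Rightarrow> 'a) \<Rightarrow> (int \<Rightarrow> 'a)) set
     \<Rightarrow> ('a \<Rightarrow> 'a) set \<Rightarrow> ('a \<Rightarrow> ((int \<Rightarrow> 'a) \<Rightarrow> (int \<Rightarrow> 'a)))
     \<Rightarrow> (((int \<Rightarrow> 'a) \<Rightarrow> (int \<Rightarrow> 'a)) \<Rightarrow> ('a \<Rightarrow> 'a)) \<Rightarrow> bool" where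
  "short_exact B M1 M2 M3 \<phi> \<psi> \<longleftrightarrow>
     (\<forall>f\<in>M1. \<phi> f \<in> M2) \<and> (\<forall>\<delta>\<in>M2. \<psi> \<delta> \<in> M3) \<and>
     (\<forall>b\<in>B. \<forall>f\<in>M1. \<forall>f'\<in>M1. \<phi> (f + f') = (\<lambda>a n. \<phi> f a n + \<phi> f' a n) \<and>
          \<phi> (b * f) = (\<lambda>a n. b * \<phi> f a n)) \<and>
     (\<forall>b\<in>B. \<forall>\<delta>\<in>M2. \<forall>\<delta>'\<in>M2. \<psi> (\<lambda>a n. \<delta> a n + \<delta>' a n) = (\<lambda>x. \<psi> \<delta> x + \<psi> \<delta>' x) \<and>
          \<psi> (\<lambda>a n. b * \<delta> a n) = (\<lambda>x. b * \<psi> \<delta> x)) \<and>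
     inj_on \<phi> M1 \<and>
     \<phi> ` M1 = {\<delta>\<in>M2. \<psi> \<delta> = (\<lambda>_. 0)} \<and>
     \<psi> ` M2 = M3"

end

theory Submission
  imports Defs
begin

(* Every derivation \<delta> of A of degree d is determined by a derivation \<sigma> of B and a scalar
   \<alpha> \<in> K(X): on x T^k it acts as x T^k \<mapsto> (\<sigma>'(x) + k \<alpha> x) T^(k+d), where \<sigma>' is the extension
   of \<sigma> to g^(-m(k)) B by the quotient rule (hom_part).  Conversely such a pair (\<sigma>, \<alpha>)
   defines a derivation of A exactly when it maps each graded piece A_k into A_(k+d)
   ("admissible"), and this happens iff g^(m(d)) \<sigma>(B) \<subseteq> B and, for every k,
   (k \<alpha> - m(k) \<sigma>(g)/g) g^(m(k+d)-m(k)) \<in> B.  Then \<phi>_U(f) is the pair (0, f) and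
   \<psi>_U(\<delta>) = \<sigma>, so the sequence is exact as soon as one identifies (a) the admissible \<alpha>
   for \<sigma> = 0 and (b) the derivations \<sigma> occurring in admissible pairs.  Both reduce to
   the arithmetic of the jump m(k+d) - m(k) \<in> {m(d), m(d)+1}, which is governed by
   whether p d \<equiv> -1 (mod q) and by the characteristic dividing q. *)

section \<open>Arithmetic of the weights m(k) = floor(p k / q)\<close>

text \<open>An additive function on the integers is determined by its value at 1; used to show that
  the T\<partial>_T-component of a homogeneous derivation is a constant \<alpha>.\<close>
lemma additive_int_linear:
  fixes F :: "int \<Rightarrow> 'a::field"
  assumes F: "\<And>i j. F (i + j) = F i + F j"
  shows "F k = of_int k * F 1"
proof -
  have F0: "F 0 = 0" using F[of 0 0] by (metis add_0 add_cancel_right_right)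
  have nat: "F (int n) = of_nat n * F 1" for n
  proof (induction n)
    case 0 then show ?case using F0 by simp
  next
    case (Suc n)
    have "F (int (Suc n)) = F 1 + F (int n)" using F[of 1 "int n"] by simp
    then show ?case using Suc by (simp add: algebra_simps)
  qed
  show ?thesis
  proof (cases "k \<ge> 0")
    case True
    then show ?thesis using nat[of "nat k"] by simp
  next
    case False
    have "F k = - F (- k)" using F[of "- k" k] F0 by (simp add: eq_neg_iff_add_eq_0 add.commute)
    then show ?thesis using nat[of "nat (- k)"] False by simp
  qed
qed

lemma flr_eq_div: "flr p q k = p * k div q"
  unfolding flr_def by (rule floor_divide_of_int_eq)

lemma div_add_carry:
  fixes a b q :: int
  assumes q: "0 < q"
  shows "(a + b) div q = a div q + b div q + (if q \<le> a mod q + b mod q then 1 else 0)"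
proof -
  let ?r = "a mod q + b mod q"
  have "0 \<le> a mod q" "a mod q < q" "0 \<le> b mod q" "b mod q < q" using q by simp_all
  then have r: "0 \<le> ?r" "?r < 2 * q" by linarith+
  have "?r div q = (if q \<le> ?r then 1 else 0)"
  proof (cases "q \<le> ?r")
    case True
    have "?r div q = (?r - q) div q + 1" using q True by (rule div_pos_geq)
    also have "(?r - q) div q = 0" using True r by (intro div_pos_pos_trivial) simp_all
    finally show ?thesis using True by simp
  next
    case False
    then show ?thesis using r by (simp add: div_pos_pos_trivial)
  qed
  then show ?thesis by (simp only: div_add1_eq[of a b q])
qed

lemma flr_add_carry:
  "0 < q \<Longrightarrow> flr p q (k + l) = flr p q k + flr p q l + (if q \<le> p * k mod q + p * l mod q then 1 else 0)"
  unfolding flr_eq_div distrib_left by (rule div_add_carry)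

text \<open>m is superadditive; this makes A = \<Oplus> A_k T^k a ring.\<close>
lemma flr_superadditive: "0 < q \<Longrightarrow> flr p q k + flr p q l \<le> flr p q (k + l)"
  using flr_add_carry[of q p k l] by simp

lemma flr_zero [simp]: "flr p q 0 = 0"
  by (simp add: flr_eq_div)

lemma flr_period: "0 < q \<Longrightarrow> flr p q q = p"
  by (simp add: flr_eq_div)

lemma flr_multiple: "0 < q \<Longrightarrow> q dvd k \<Longrightarrow> flr p q k * q = k * p"
  by (auto simp: flr_eq_div)

lemma flr_jump_dvd:
  assumes q: "0 < q" and k: "q dvd k"
  shows "flr p q (k + d) = flr p q k + flr p q d"
proof -
  have "p * d mod q < q" using q by simp
  then show ?thesis using flr_add_carry[OF q, of p k d] k by simp
qed

lemma flr_jump_carry: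
  assumes q: "0 < q" and pd: "p * d mod q = q - 1" and cop: "coprime p q" and k: "\<not> q dvd k"
  shows "flr p q (k + d) = flr p q k + flr p q d + 1"
proof -
  have "\<not> q dvd p * k" using k cop by (simp add: coprime_commute coprime_dvd_mult_right_iff)
  then have "p * k mod q \<noteq> 0" by (simp add: dvd_eq_mod_eq_0)
  moreover have "p * k mod q \<ge> 0" using q by simp
  ultimately show ?thesis using flr_add_carry[OF q, of p k d] pd by simp
qed

lemma flr_jump_inverse:
  assumes q: "0 < q" and pu: "p * u mod q = 1" and pd: "p * d mod q \<noteq> q - 1"
  shows "flr p q (u + d) = flr p q u + flr p q d"
proof -
  have "p * d mod q < q" using q by simp
  then show ?thesis using flr_add_carry[OF q, of p u d] pu pd by simp
qed

lemma flr_inverse: "p * u mod q = 1 \<Longrightarrow> p * u = flr p q u * q + 1"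
  using div_mult_mod_eq[of "p * u" q] by (simp add: flr_eq_div)

lemma minus_one_mod: "0 < q \<Longrightarrow> (- 1) mod q = q - (1::int)"
  by (cases "q = 1") (auto simp: zmod_zminus1_eq_if)

section \<open>The graded ring A_U\<close>

locale graded_chart =
  fixes kk B :: "'a::field set" and g :: 'a and p q d :: int
  assumes subfield: "is_subfield kk" and subring: "is_subring B" and kk_sub_B: "kk \<subseteq> B"
    and g_in_B: "g \<in> B" and g_nonzero: "g \<noteq> 0" and q_pos: "0 < q"
begin

abbreviation m :: "int \<Rightarrow> int" where "m k \<equiv> flr p q k"

abbreviation A :: "int \<Rightarrow> 'a set" where "A k \<equiv> Osec B g (m k)"

lemma B_0: "0 \<in> B" and B_1: "1 \<in> B" and B_add: "x \<in> B \<Longrightarrow> y \<in> B \<Longrightarrow> x + y \<in> B"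
  and B_mult: "x \<in> B \<Longrightarrow> y \<in> B \<Longrightarrow> x * y \<in> B" and B_uminus: "x \<in> B \<Longrightarrow> - x \<in> B"
  using subring unfolding is_subring_def by auto

lemma B_diff: "x \<in> B \<Longrightarrow> y \<in> B \<Longrightarrow> x - y \<in> B"
  using B_add B_uminus by (metis diff_conv_add_uminus)

lemma kk_of_int: "of_int n \<in> kk"
proof -
  have kk: "0 \<in> kk" "1 \<in> kk" "\<And>x y. x \<in> kk \<Longrightarrow> y \<in> kk \<Longrightarrow> x + y \<in> kk" "\<And>x. x \<in> kk \<Longrightarrow> - x \<in> kk"
    using subfield unfolding is_subfield_def by auto
  have nat: "of_nat j \<in> kk" for j
    by (induction j) (auto intro: kk simp: add.commute)
  show ?thesis
    using nat[of "nat n"] kk(4)[OF nat[of "nat (- n)"]] by (cases "n \<ge> 0") simp_all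
qed

lemma B_of_int: "of_int n \<in> B"
  using kk_of_int kk_sub_B by auto

text \<open>Integers that are nonzero in K(X) are units of kk, hence of B.\<close>
lemma B_inverse_of_int: "inverse (of_int n) \<in> B"
  using kk_of_int subfield kk_sub_B unfolding is_subfield_def
  by (cases "(of_int n :: 'a) = 0") (auto intro: B_0)

lemma B_gpow: "0 \<le> n \<Longrightarrow> g powi n \<in> B"
proof -
  have "g ^ j \<in> B" for j by (induction j) (auto intro: B_mult B_1 g_in_B)
  then show "0 \<le> n \<Longrightarrow> g powi n \<in> B" by (simp add: power_int_nonneg_exp)
qed

lemma gpow_add: "g powi (a + b) = g powi a * g powi b"
  using g_nonzero by (simp add: power_int_add)

lemma gpow_inverse: "g powi (- t) * g powi t = 1"
  using g_nonzero by (simp add: power_int_minus)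

lemma Osec_mult:
  assumes x: "x \<in> Osec B g a" and y: "y \<in> Osec B g b" and c: "a + b \<le> c"
  shows "x * y \<in> Osec B g c"
proof -
  have "x * y * g powi c = (x * g powi a) * (y * g powi b) * g powi (c - a - b)"
    using gpow_add[of a "b + (c - a - b)"] gpow_add[of b "c - a - b"] by (simp add: ac_simps)
  also have "\<dots> \<in> B"
    using x y c by (intro B_mult[OF B_mult B_gpow]) (auto simp: Osec_def)
  finally show ?thesis by (simp add: Osec_def)
qed

lemma Osec_add: "x \<in> Osec B g a \<Longrightarrow> y \<in> Osec B g a \<Longrightarrow> x + y \<in> Osec B g a"
  by (simp add: Osec_def distrib_right B_add)

lemma Osec_0: "0 \<in> Osec B g a"
  by (simp add: Osec_def B_0)

lemma Osec_sum: "finite S \<Longrightarrow> (\<And>i. i \<in> S \<Longrightarrow> f i \<in> Osec B g a) \<Longrightarrow> sum f S \<in> Osec B g a"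
  by (induction S rule: finite_induct) (auto intro: Osec_add Osec_0)

lemma A_zero_iff: "x \<in> Osec B g 0 \<longleftrightarrow> x \<in> B"
  by (simp add: Osec_def)

lemma A_mult: "x \<in> A i \<Longrightarrow> y \<in> A j \<Longrightarrow> x * y \<in> A (i + j)"
  using Osec_mult flr_superadditive[OF q_pos] by blast

definition gen :: "int \<Rightarrow> 'a" where "gen k = g powi (- m k)"

lemma gen_gpow: "gen k * g powi (m k) = 1"
  unfolding gen_def by (rule gpow_inverse)

lemma gen_nonzero: "gen k \<noteq> 0"
  using g_nonzero by (simp add: gen_def)

lemma gen_in_A: "gen k \<in> A k"
  using gen_gpow[of k] B_1 by (simp add: Osec_def)

lemma gen_mult_gpow: "gen k * g powi m (k + d) = g powi (m (k + d) - m k)"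
  unfolding gen_def gpow_add[symmetric] by simp

lemma gen_mult_jump: "gen (i + j) * g ^ nat (m (i + j) - m i - m j) = gen i * gen j"
proof -
  have K: "int (nat (m (i + j) - m i - m j)) = m (i + j) - m i - m j"
    using flr_superadditive[OF q_pos, of p i j] by simp
  have "gen (i + j) * g ^ nat (m (i + j) - m i - m j) = g powi (- m (i + j) + (m (i + j) - m i - m j))"
    unfolding gen_def gpow_add power_int_of_nat[symmetric] K ..
  also have "\<dots> = gen i * gen j" by (simp add: gen_def gpow_add[symmetric])
  finally show ?thesis .
qed

lemma AU_iff: "a \<in> AU B g p q \<longleftrightarrow> finite {i. a i \<noteq> 0} \<and> (\<forall>i. a i \<in> A i)"
  by (simp add: AU_def)

lemma zero_AU: "(\<lambda>_. 0) \<in> AU B g p q"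
  by (simp add: AU_iff Osec_0)

lemma lsingle_AU: "lsingle i x \<in> AU B g p q \<longleftrightarrow> x \<in> A i"
proof
  assume "lsingle i x \<in> AU B g p q"
  then show "x \<in> A i" unfolding AU_iff by (metis lsingle_def)
next
  assume x: "x \<in> A i"
  have "{n. lsingle i x n \<noteq> 0} \<subseteq> {i}" by (auto simp: lsingle_def split: if_splits)
  then have "finite {n. lsingle i x n \<noteq> 0}" by (rule finite_subset) simp
  moreover have "\<forall>n. lsingle i x n \<in> A n" using x Osec_0 by (simp add: lsingle_def)
  ultimately show "lsingle i x \<in> AU B g p q" by (simp add: AU_iff)
qed

lemma lmul_lsingle: "lmul (lsingle i x) b = (\<lambda>n. x * b (n - i))"
proof
  fix n
  show "lmul (lsingle i x) b n = x * b (n - i)"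
  proof (cases "x = 0")
    case False
    then have "{j. lsingle i x j \<noteq> 0} = {i}" by (auto simp: lsingle_def)
    then show ?thesis by (simp add: lmul_def lsingle_def)
  qed (simp add: lmul_def lsingle_def)
qed

lemma lsingle_mult: "lmul (lsingle i x) (lsingle j y) = lsingle (i + j) (x * y)"
  unfolding lmul_lsingle by (auto simp: lsingle_def fun_eq_iff)

lemma lsingle_add: "(\<lambda>n. lsingle k x n + lsingle k y n) = lsingle k (x + y)"
  by (simp add: lsingle_def fun_eq_iff)

lemma lsingle_scale: "(\<lambda>n. c * lsingle k x n) = lsingle k (c * x)"
  by (simp add: lsingle_def fun_eq_iff)

lemma lsingle_zero: "lsingle k 0 = (\<lambda>_. 0)"
  by (simp add: lsingle_def fun_eq_iff)

lemma AU_add: "a \<in> AU B g p q \<Longrightarrow> b \<in> AU B g p q \<Longrightarrow> (\<lambda>n. a n + b n) \<in> AU B g p q"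
proof -
  assume a: "a \<in> AU B g p q" and b: "b \<in> AU B g p q"
  have "{n. a n + b n \<noteq> 0} \<subseteq> {n. a n \<noteq> 0} \<union> {n. b n \<noteq> 0}" by auto
  then have "finite {n. a n + b n \<noteq> 0}" using a b by (auto simp: AU_iff intro: finite_subset)
  then show ?thesis using a b by (auto simp: AU_iff intro: Osec_add)
qed

lemma AU_scale: "c \<in> kk \<Longrightarrow> a \<in> AU B g p q \<Longrightarrow> (\<lambda>n. c * a n) \<in> AU B g p q"
proof -
  assume c: "c \<in> kk" and a: "a \<in> AU B g p q"
  have "{n. c * a n \<noteq> 0} \<subseteq> {n. a n \<noteq> 0}" by auto
  then have "finite {n. c * a n \<noteq> 0}" using a by (auto simp: AU_iff intro: finite_subset)
  moreover have "c \<in> Osec B g 0" using c kk_sub_B by (auto simp: Osec_def)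
  then have "c * a n \<in> A n" for n using Osec_mult[of c 0 "a n" "m n" "m n"] a by (simp add: AU_iff)
  ultimately show ?thesis by (simp add: AU_iff)
qed

lemma AU_lmul: "a \<in> AU B g p q \<Longrightarrow> b \<in> AU B g p q \<Longrightarrow> lmul a b \<in> AU B g p q"
proof -
  assume a: "a \<in> AU B g p q" and b: "b \<in> AU B g p q"
  let ?Sa = "{n. a n \<noteq> 0}" and ?Sb = "{n. b n \<noteq> 0}"
  have fa: "finite ?Sa" and fb: "finite ?Sb" using a b by (auto simp: AU_iff)
  have "{n. lmul a b n \<noteq> 0} \<subseteq> (\<lambda>(i, j). i + j) ` (?Sa \<times> ?Sb)"
  proof
    fix n assume "n \<in> {n. lmul a b n \<noteq> 0}"
    then have "(\<Sum>i\<in>?Sa. a i * b (n - i)) \<noteq> 0" by (simp add: lmul_def)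
    then obtain i where "i \<in> ?Sa" "a i * b (n - i) \<noteq> 0" by (meson sum.neutral)
    then show "n \<in> (\<lambda>(i, j). i + j) ` (?Sa \<times> ?Sb)"
      by (intro image_eqI[of _ _ "(i, n - i)"]) auto
  qed
  then have "finite {n. lmul a b n \<noteq> 0}" using fa fb by (auto intro: finite_subset)
  moreover have "lmul a b n \<in> A n" for n
    unfolding lmul_def
  proof (rule Osec_sum[OF fa])
    fix i
    show "a i * b (n - i) \<in> A n"
      using a b A_mult[of "a i" i "b (n - i)" "n - i"] by (simp add: AU_iff)
  qed
  ultimately show ?thesis by (simp add: AU_iff)
qed

section \<open>Derivations of A_U built from a derivation of B and a scalar\<close>

definition is_der :: "('a \<Rightarrow> 'a) \<Rightarrow> bool" where
  "is_der \<sigma> \<longleftrightarrow> (\<forall>x\<in>B. \<forall>y\<in>B. \<sigma> (x + y) = \<sigma> x + \<sigma> y \<and> \<sigma> (x * y) = x * \<sigma> y + \<sigma> x * y) \<and>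
     (\<forall>c\<in>kk. \<forall>x\<in>B. \<sigma> (c * x) = c * \<sigma> x)"

lemma is_der_add: "is_der \<sigma> \<Longrightarrow> x \<in> B \<Longrightarrow> y \<in> B \<Longrightarrow> \<sigma> (x + y) = \<sigma> x + \<sigma> y"
  and is_der_mult: "is_der \<sigma> \<Longrightarrow> x \<in> B \<Longrightarrow> y \<in> B \<Longrightarrow> \<sigma> (x * y) = x * \<sigma> y + \<sigma> x * y"
  and is_der_scale: "is_der \<sigma> \<Longrightarrow> c \<in> kk \<Longrightarrow> x \<in> B \<Longrightarrow> \<sigma> (c * x) = c * \<sigma> x"
  by (auto simp: is_der_def)

lemma is_der_zero: "is_der (\<lambda>_. 0)"
  by (simp add: is_der_def)

lemma is_der_twist: "\<theta> \<in> DerB kk B \<Longrightarrow> is_der (\<lambda>x. c * \<theta> x)"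
  by (simp add: is_der_def DerB_def algebra_simps)

lemma DerB_iff: "\<theta> \<in> DerB kk B \<longleftrightarrow> is_der \<theta> \<and> (\<forall>x. x \<notin> B \<longrightarrow> \<theta> x = 0) \<and> (\<forall>x\<in>B. \<theta> x \<in> B)"
  by (auto simp: DerB_def is_der_def)

lemma der_0: "is_der \<sigma> \<Longrightarrow> \<sigma> 0 = 0"
proof -
  assume "is_der \<sigma>"
  then have "\<sigma> 0 + \<sigma> 0 = \<sigma> 0 + 0" using is_der_add[OF _ B_0 B_0] by simp
  then show ?thesis by (rule add_left_cancel[THEN iffD1])
qed

lemma der_1: "is_der \<sigma> \<Longrightarrow> \<sigma> 1 = 0"
proof -
  assume "is_der \<sigma>"
  then have "\<sigma> 1 + \<sigma> 1 = \<sigma> 1 + 0" using is_der_mult[OF _ B_1 B_1] by simp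
  then show ?thesis by (rule add_left_cancel[THEN iffD1])
qed

lemma der_gpow: "is_der \<sigma> \<Longrightarrow> \<sigma> (g ^ n) = of_nat n * g ^ n * (\<sigma> g / g)"
proof (induction n)
  case 0 then show ?case by (simp add: der_1)
next
  case (Suc n)
  have "g ^ n \<in> B" using B_gpow[of "int n"] by simp
  then have "\<sigma> (g * g ^ n) = g * \<sigma> (g ^ n) + \<sigma> g * g ^ n" using Suc.prems g_in_B by (intro is_der_mult)
  then show ?case using Suc g_nonzero by (simp add: field_simps)
qed

text \<open>The candidate action on x T^k (x \<in> A_k) of \<sigma> + \<alpha> T\<partial>_T, divided by T^(k+d): the
  quotient-rule extension of \<sigma> to x = (x g^(m k)) g^(-m k), plus k \<alpha> x.\<close>
definition hom_part :: "('a \<Rightarrow> 'a) \<Rightarrow> 'a \<Rightarrow> int \<Rightarrow> 'a \<Rightarrow> 'a" where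
  "hom_part \<sigma> \<alpha> k x = gen k * \<sigma> (x * g powi (m k)) + x * (of_int k * \<alpha> - of_int (m k) * (\<sigma> g / g))"

lemma hom_part_zero_degree: "is_der \<sigma> \<Longrightarrow> hom_part \<sigma> \<alpha> 0 b = \<sigma> b"
  using gen_gpow[of 0] by (simp add: hom_part_def)

lemma hom_part_gen: "is_der \<sigma> \<Longrightarrow> hom_part \<sigma> \<alpha> k (gen k) = gen k * (of_int k * \<alpha> - of_int (m k) * (\<sigma> g / g))"
  using gen_gpow[of k] der_1 by (simp add: hom_part_def)

lemma hom_part_mult:
  assumes \<sigma>: "is_der \<sigma>" and x: "x \<in> A i" and y: "y \<in> A j"
  shows "hom_part \<sigma> \<alpha> (i + j) (x * y) = x * hom_part \<sigma> \<alpha> j y + hom_part \<sigma> \<alpha> i x * y"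
proof -
  define X where "X = x * g powi (m i)"
  define Y where "Y = y * g powi (m j)"
  define K where "K = nat (m (i + j) - m i - m j)"
  define \<gamma> where "\<gamma> = \<sigma> g / g"
  have XB: "X \<in> B" and YB: "Y \<in> B" using x y by (auto simp: X_def Y_def Osec_def)
  have K: "int K = m (i + j) - m i - m j"
    using flr_superadditive[OF q_pos, of p i j] by (simp add: K_def)
  have "g powi m (i + j) = g powi (m i + m j + int K)" using K by simp
  then have gsplit: "g powi m (i + j) = g powi m i * g powi m j * g ^ K" by (simp add: gpow_add)
  have xy: "x * y * g powi m (i + j) = X * Y * g ^ K" by (simp add: gsplit X_def Y_def ac_simps)
  have eK: "gen (i + j) * g ^ K = gen i * gen j" unfolding K_def by (rule gen_mult_jump)
  have ex: "gen i * X = x" and ey: "gen j * Y = y"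
    using gen_gpow[of i] gen_gpow[of j] by (simp_all add: X_def Y_def ac_simps)
  have "g ^ K \<in> B" using B_gpow[of "int K"] by simp
  then have sXYg: "\<sigma> (X * Y * g ^ K) = (X * \<sigma> Y + \<sigma> X * Y) * g ^ K + X * Y * (of_nat K * g ^ K * \<gamma>)"
    using is_der_mult[OF \<sigma> B_mult[OF XB YB]] is_der_mult[OF \<sigma> XB YB] der_gpow[OF \<sigma>, of K]
    by (simp add: \<gamma>_def)
  have "hom_part \<sigma> \<alpha> (i + j) (x * y) = gen (i + j) * g ^ K * (X * \<sigma> Y + \<sigma> X * Y + X * Y * of_nat K * \<gamma>)
      + x * y * (of_int (i + j) * \<alpha> - of_int (m (i + j)) * \<gamma>)"
    unfolding hom_part_def xy sXYg \<gamma>_def[symmetric] by (simp add: algebra_simps)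
  also have "\<dots> = x * (gen j * \<sigma> Y) + (gen i * \<sigma> X) * y + x * y * of_nat K * \<gamma>
      + x * y * (of_int (i + j) * \<alpha> - of_int (m (i + j)) * \<gamma>)"
    unfolding eK by (simp add: ex[symmetric] ey[symmetric] algebra_simps)
  also have "\<dots> = x * hom_part \<sigma> \<alpha> j y + hom_part \<sigma> \<alpha> i x * y"
  proof -
    have Kof: "(of_int (m (i + j)) :: 'a) = of_nat K + of_int (m i) + of_int (m j)"
      using arg_cong[OF K, of "of_int :: int \<Rightarrow> 'a"] by simp
    show ?thesis unfolding hom_part_def X_def[symmetric] Y_def[symmetric] \<gamma>_def[symmetric] Kof
      by (simp add: algebra_simps)
  qed
  finally show ?thesis .
qed

lemma hom_part_add:
  "is_der \<sigma> \<Longrightarrow> x \<in> A k \<Longrightarrow> y \<in> A k \<Longrightarrow> hom_part \<sigma> \<alpha> k (x + y) = hom_part \<sigma> \<alpha> k x + hom_part \<sigma> \<alpha> k y"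
  unfolding hom_part_def distrib_right
  by (subst is_der_add) (auto simp: Osec_def algebra_simps)

lemma hom_part_0: "is_der \<sigma> \<Longrightarrow> hom_part \<sigma> \<alpha> k 0 = 0"
  by (simp add: hom_part_def der_0)

lemma hom_part_scale:
  "is_der \<sigma> \<Longrightarrow> c \<in> kk \<Longrightarrow> x \<in> A k \<Longrightarrow> hom_part \<sigma> \<alpha> k (c * x) = c * hom_part \<sigma> \<alpha> k x"
  unfolding hom_part_def mult.assoc
  by (subst is_der_scale) (auto simp: Osec_def algebra_simps)

lemma hom_part_sum:
  assumes \<sigma>: "is_der \<sigma>" and fS: "finite S" and f: "\<And>i. i \<in> S \<Longrightarrow> f i \<in> A k"
  shows "hom_part \<sigma> \<alpha> k (sum f S) = (\<Sum>i\<in>S. hom_part \<sigma> \<alpha> k (f i))"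
  using fS f
proof (induction S rule: finite_induct)
  case empty then show ?case by (simp add: hom_part_0[OF \<sigma>])
next
  case (insert a S)
  then show ?case by (simp add: hom_part_add[OF \<sigma>] Osec_sum)
qed

lemma hom_part_cong:
  "(\<And>b. b \<in> B \<Longrightarrow> \<sigma> b = \<sigma>' b) \<Longrightarrow> x \<in> A k \<Longrightarrow> hom_part \<sigma> \<alpha> k x = hom_part \<sigma>' \<alpha> k x"
  using g_in_B by (simp add: hom_part_def Osec_def)

definition der_of :: "('a \<Rightarrow> 'a) \<Rightarrow> 'a \<Rightarrow> (int \<Rightarrow> 'a) \<Rightarrow> int \<Rightarrow> 'a" where
  "der_of \<sigma> \<alpha> = (\<lambda>a. if a \<in> AU B g p q then (\<lambda>n. hom_part \<sigma> \<alpha> (n - d) (a (n - d))) else (\<lambda>_. 0))"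

definition admissible :: "('a \<Rightarrow> 'a) \<Rightarrow> 'a \<Rightarrow> bool" where
  "admissible \<sigma> \<alpha> \<longleftrightarrow> (\<forall>k x. x \<in> A k \<longrightarrow> hom_part \<sigma> \<alpha> k x \<in> A (k + d))"

lemma der_of_cong: "(\<And>b. b \<in> B \<Longrightarrow> \<sigma> b = \<sigma>' b) \<Longrightarrow> der_of \<sigma> \<alpha> = der_of \<sigma>' \<alpha>"
  by (auto simp: der_of_def fun_eq_iff AU_iff intro!: hom_part_cong)

lemma admissible_cong: "(\<And>b. b \<in> B \<Longrightarrow> \<sigma> b = \<sigma>' b) \<Longrightarrow> admissible \<sigma> \<alpha> \<Longrightarrow> admissible \<sigma>' \<alpha>"
  unfolding admissible_def using hom_part_cong by metis

lemma der_of_support: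
  assumes \<sigma>: "is_der \<sigma>" and a: "a \<in> AU B g p q"
  shows "{n. der_of \<sigma> \<alpha> a n \<noteq> 0} \<subseteq> (\<lambda>i. i + d) ` {i. a i \<noteq> 0}"
proof
  fix n assume "n \<in> {n. der_of \<sigma> \<alpha> a n \<noteq> 0}"
  then have "a (n - d) \<noteq> 0" using a by (auto simp: der_of_def hom_part_0[OF \<sigma>])
  then show "n \<in> (\<lambda>i. i + d) ` {i. a i \<noteq> 0}" by (intro image_eqI[of _ _ "n - d"]) auto
qed

lemma der_of_lmul:
  assumes \<sigma>: "is_der \<sigma>" and a: "a \<in> AU B g p q" and b: "b \<in> AU B g p q"
  shows "der_of \<sigma> \<alpha> (lmul a b) = (\<lambda>n. lmul a (der_of \<sigma> \<alpha> b) n + lmul (der_of \<sigma> \<alpha> a) b n)"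
proof
  fix n
  let ?\<delta> = "der_of \<sigma> \<alpha>" and ?D = "hom_part \<sigma> \<alpha>" and ?Sa = "{i. a i \<noteq> 0}"
  have fa: "finite ?Sa" and ai: "\<And>i. a i \<in> A i" and bi: "\<And>i. b i \<in> A i"
    using a b by (simp_all add: AU_iff)
  have "?\<delta> (lmul a b) n = ?D (n - d) (\<Sum>i\<in>?Sa. a i * b (n - d - i))"
    using AU_lmul[OF a b] by (simp add: der_of_def lmul_def)
  also have "\<dots> = (\<Sum>i\<in>?Sa. ?D (n - d) (a i * b (n - d - i)))"
  proof (rule hom_part_sum[OF \<sigma> fa])
    fix i show "a i * b (n - d - i) \<in> A (n - d)" using A_mult[OF ai bi, of i "n - d - i"] by simp
  qed
  also have "\<dots> = (\<Sum>i\<in>?Sa. a i * ?D (n - d - i) (b (n - d - i)) + ?D i (a i) * b (n - d - i))"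
  proof (rule sum.cong)
    fix i
    show "?D (n - d) (a i * b (n - d - i)) = a i * ?D (n - d - i) (b (n - d - i)) + ?D i (a i) * b (n - d - i)"
      using hom_part_mult[OF \<sigma> ai bi, of \<alpha> i "n - d - i"] by simp
  qed simp
  also have "\<dots> = lmul a (?\<delta> b) n + lmul (?\<delta> a) b n"
  proof -
    have 1: "lmul a (?\<delta> b) n = (\<Sum>i\<in>?Sa. a i * ?D (n - d - i) (b (n - d - i)))"
      using b by (simp add: lmul_def der_of_def algebra_simps)
    have "lmul (?\<delta> a) b n = (\<Sum>j\<in>(\<lambda>i. i + d) ` ?Sa. ?\<delta> a j * b (n - j))"
      unfolding lmul_def using fa der_of_support[OF \<sigma> a] by (intro sum.mono_neutral_left) auto
    also have "\<dots> = (\<Sum>i\<in>?Sa. ?D i (a i) * b (n - d - i))"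
      by (subst sum.reindex) (auto simp: inj_on_def der_of_def a algebra_simps)
    finally show ?thesis using 1 by (simp add: sum.distrib)
  qed
  finally show "?\<delta> (lmul a b) n = lmul a (?\<delta> b) n + lmul (?\<delta> a) b n" .
qed

lemma der_of_DerA:
  assumes \<sigma>: "is_der \<sigma>" and adm: "admissible \<sigma> \<alpha>"
  shows "der_of \<sigma> \<alpha> \<in> DerA kk B g p q d"
  unfolding DerA_def
proof (intro CollectI conjI allI ballI impI)
  fix a assume "a \<notin> AU B g p q"
  then show "der_of \<sigma> \<alpha> a = (\<lambda>_. 0)" by (simp add: der_of_def)
next
  fix a assume a: "a \<in> AU B g p q"
  have "finite {n. der_of \<sigma> \<alpha> a n \<noteq> 0}"
    by (rule finite_subset[OF der_of_support[OF \<sigma> a]]) (use a in \<open>simp add: AU_iff\<close>)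
  moreover have "der_of \<sigma> \<alpha> a n \<in> A n" for n
    using adm a unfolding admissible_def by (auto simp: der_of_def AU_iff) (metis diff_add_cancel)
  ultimately show "der_of \<sigma> \<alpha> a \<in> AU B g p q" by (simp add: AU_iff)
next
  fix a b assume a: "a \<in> AU B g p q" and b: "b \<in> AU B g p q"
  show "der_of \<sigma> \<alpha> (\<lambda>n. a n + b n) = (\<lambda>n. der_of \<sigma> \<alpha> a n + der_of \<sigma> \<alpha> b n)"
    using a b AU_add[OF a b] by (auto simp: der_of_def AU_iff hom_part_add[OF \<sigma>] fun_eq_iff)
  show "der_of \<sigma> \<alpha> (lmul a b) = (\<lambda>n. lmul a (der_of \<sigma> \<alpha> b) n + lmul (der_of \<sigma> \<alpha> a) b n)"
    by (rule der_of_lmul[OF \<sigma> a b])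
next
  fix c a assume c: "c \<in> kk" and a: "a \<in> AU B g p q"
  show "der_of \<sigma> \<alpha> (\<lambda>n. c * a n) = (\<lambda>n. c * der_of \<sigma> \<alpha> a n)"
    using a c AU_scale[OF c a] by (auto simp: der_of_def AU_iff hom_part_scale[OF \<sigma>] fun_eq_iff)
next
  fix i x n assume "lsingle i x \<in> AU B g p q" and "n \<noteq> i + d"
  then show "der_of \<sigma> \<alpha> (lsingle i x) n = 0" by (auto simp: der_of_def lsingle_def hom_part_0[OF \<sigma>])
qed

section \<open>Every degree-d derivation of A_U comes from an admissible pair\<close>

definition coef :: "((int \<Rightarrow> 'a) \<Rightarrow> (int \<Rightarrow> 'a)) \<Rightarrow> int \<Rightarrow> 'a \<Rightarrow> 'a" where
  "coef \<delta> k x = \<delta> (lsingle k x) (k + d)"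

context
  fixes \<delta> assumes \<delta>: "\<delta> \<in> DerA kk B g p q d"
begin

lemma der_outside: "a \<notin> AU B g p q \<Longrightarrow> \<delta> a = (\<lambda>_. 0)"
  and der_AU: "a \<in> AU B g p q \<Longrightarrow> \<delta> a \<in> AU B g p q"
  and der_add: "a \<in> AU B g p q \<Longrightarrow> b \<in> AU B g p q \<Longrightarrow> \<delta> (\<lambda>n. a n + b n) = (\<lambda>n. \<delta> a n + \<delta> b n)"
  and der_lmul: "a \<in> AU B g p q \<Longrightarrow> b \<in> AU B g p q \<Longrightarrow> \<delta> (lmul a b) = (\<lambda>n. lmul a (\<delta> b) n + lmul (\<delta> a) b n)"
  and der_scale: "c \<in> kk \<Longrightarrow> a \<in> AU B g p q \<Longrightarrow> \<delta> (\<lambda>n. c * a n) = (\<lambda>n. c * \<delta> a n)"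
  and der_degree: "lsingle i x \<in> AU B g p q \<Longrightarrow> n \<noteq> i + d \<Longrightarrow> \<delta> (lsingle i x) n = 0"
  using \<delta> by (simp_all add: DerA_def)

lemma der_zero: "\<delta> (\<lambda>_. 0) = (\<lambda>_. 0)"
proof
  fix n
  have "\<delta> (\<lambda>_. 0) n + \<delta> (\<lambda>_. 0) n = \<delta> (\<lambda>_. 0) n + 0"
    using fun_cong[OF der_add[OF zero_AU zero_AU], of n] by simp
  then show "\<delta> (\<lambda>_. 0) n = 0" by (rule add_left_cancel[THEN iffD1])
qed

lemma coef_0: "coef \<delta> k 0 = 0"
  by (simp add: coef_def lsingle_zero der_zero)

lemma der_lsingle: "x \<in> A k \<Longrightarrow> \<delta> (lsingle k x) = lsingle (k + d) (coef \<delta> k x)"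
proof
  fix n assume x: "x \<in> A k"
  show "\<delta> (lsingle k x) n = lsingle (k + d) (coef \<delta> k x) n"
  proof (cases "n = k + d")
    case False
    then show ?thesis using der_degree[of k x n] x by (simp add: lsingle_AU) (simp add: lsingle_def)
  qed (simp add: lsingle_def coef_def)
qed

lemma coef_in_A: "x \<in> A k \<Longrightarrow> coef \<delta> k x \<in> A (k + d)"
  using der_AU[of "lsingle k x"] by (simp add: lsingle_AU der_lsingle)

lemma coef_mult:
  assumes x: "x \<in> A i" and y: "y \<in> A j"
  shows "coef \<delta> (i + j) (x * y) = x * coef \<delta> j y + coef \<delta> i x * y"
proof -
  have "\<delta> (lmul (lsingle i x) (lsingle j y)) (i + j + d) =
     lmul (lsingle i x) (\<delta> (lsingle j y)) (i + j + d) + lmul (\<delta> (lsingle i x)) (lsingle j y) (i + j + d)"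
    using der_lmul[of "lsingle i x" "lsingle j y"] x y by (simp add: lsingle_AU)
  moreover have "lmul (lsingle i x) (\<delta> (lsingle j y)) (i + j + d) = x * coef \<delta> j y"
    unfolding lmul_lsingle coef_def by (simp add: add.assoc)
  moreover have "lmul (\<delta> (lsingle i x)) (lsingle j y) (i + j + d) = coef \<delta> i x * y"
    unfolding der_lsingle[OF x] lmul_lsingle by (simp add: lsingle_def)
  ultimately show ?thesis unfolding lsingle_mult coef_def by simp
qed

lemma coef_add: "x \<in> A k \<Longrightarrow> y \<in> A k \<Longrightarrow> coef \<delta> k (x + y) = coef \<delta> k x + coef \<delta> k y"
  using der_add[of "lsingle k x" "lsingle k y"] by (simp add: lsingle_AU lsingle_add coef_def)

lemma coef_scale: "c \<in> kk \<Longrightarrow> x \<in> A k \<Longrightarrow> coef \<delta> k (c * x) = c * coef \<delta> k x"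
  using der_scale[of c "lsingle k x"] by (simp add: lsingle_AU lsingle_scale coef_def)

text \<open>In degree 0 the coefficient map is a derivation of B; it is \<sigma>_\<delta>.\<close>
lemma is_der_coef: "is_der (coef \<delta> 0)"
  unfolding is_der_def
  using coef_mult[of _ 0 _ 0] coef_add[of _ 0] coef_scale[of _ _ 0] kk_sub_B by (auto simp: A_zero_iff)

text \<open>On A_k, coef is the extension of \<sigma>_\<delta> plus multiplication by a scalar ratio(k).\<close>
definition ratio :: "int \<Rightarrow> 'a" where "ratio k = coef \<delta> k (gen k) / gen k"

lemma coef_repr: "x \<in> A k \<Longrightarrow> coef \<delta> k x = gen k * coef \<delta> 0 (x * g powi m k) + x * ratio k"
proof -
  assume x: "x \<in> A k"
  define b where "b = x * g powi m k"
  have b: "b \<in> A 0" using x by (simp add: b_def Osec_def)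
  have xb: "x = b * gen k" using gen_gpow[of k] by (simp add: b_def ac_simps)
  have "coef \<delta> (0 + k) (b * gen k) = b * coef \<delta> k (gen k) + coef \<delta> 0 b * gen k"
    by (rule coef_mult[OF b gen_in_A])
  then show ?thesis
    using gen_nonzero[of k] by (simp add: xb[symmetric] b_def[symmetric] ratio_def field_simps)
qed

text \<open>ratio(k) + m(k) \<sigma>_\<delta>(g)/g is additive in k, hence k times its value at 1.\<close>
lemma ratio_additive:
  "ratio (i + j) + of_int (m (i + j)) * (coef \<delta> 0 g / g) =
   (ratio i + of_int (m i) * (coef \<delta> 0 g / g)) + (ratio j + of_int (m j) * (coef \<delta> 0 g / g))"
proof -
  define K where "K = nat (m (i + j) - m i - m j)"
  have K: "int K = m (i + j) - m i - m j"
    using flr_superadditive[OF q_pos, of p i j] by (simp add: K_def)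
  have eK: "gen (i + j) * g ^ K = gen i * gen j" unfolding K_def by (rule gen_mult_jump)
  have ee: "gen i * gen j \<in> A (i + j)" by (rule A_mult[OF gen_in_A gen_in_A])
  have gK: "gen i * gen j * g powi m (i + j) = g ^ K"
    using gen_gpow[of "i + j"] by (simp add: eK[symmetric] ac_simps)
  have "gen i * gen j * (ratio i + ratio j) = coef \<delta> (i + j) (gen i * gen j)"
    using coef_mult[OF gen_in_A gen_in_A, of i j] gen_nonzero[of i] gen_nonzero[of j]
    by (simp add: ratio_def field_simps)
  also have "\<dots> = gen i * gen j * (of_nat K * (coef \<delta> 0 g / g) + ratio (i + j))"
    using coef_repr[OF ee] gK der_gpow[OF is_der_coef, of K] eK by (simp add: algebra_simps)
  finally have "of_nat K * (coef \<delta> 0 g / g) + ratio (i + j) = ratio i + ratio j"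
    using gen_nonzero[of i] gen_nonzero[of j] by simp
  moreover have "(of_nat K :: 'a) = of_int (m (i + j)) - of_int (m i) - of_int (m j)"
    using K by (metis of_int_diff of_int_of_nat_eq)
  ultimately show ?thesis by (simp add: algebra_simps)
qed

lemma coef_hom_part:
  assumes x: "x \<in> A k"
  shows "coef \<delta> k x = hom_part (coef \<delta> 0) (ratio 1 + of_int (m 1) * (coef \<delta> 0 g / g)) k x"
proof -
  let ?F = "\<lambda>k. ratio k + of_int (m k) * (coef \<delta> 0 g / g)"
  have "?F k = of_int k * ?F 1" by (rule additive_int_linear) (rule ratio_additive)
  then have "ratio k = of_int k * ?F 1 - of_int (m k) * (coef \<delta> 0 g / g)" by (simp only: eq_diff_eq)
  then show ?thesis using coef_repr[OF x] by (simp add: hom_part_def)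
qed

lemma der_restrict:
  assumes a: "a \<in> AU B g p q" and S: "finite S"
  shows "\<delta> (\<lambda>n. if n \<in> S then a n else 0) = (\<lambda>n. if n - d \<in> S then coef \<delta> (n - d) (a (n - d)) else 0)"
  using S
proof (induction S rule: finite_induct)
  case empty then show ?case by (simp add: der_zero)
next
  case (insert j S)
  have restr: "(\<lambda>n. if n \<in> S then a n else 0) \<in> AU B g p q"
    using a by (auto simp: AU_iff Osec_0 elim: rev_finite_subset)
  have aj: "a j \<in> A j" using a by (simp add: AU_iff)
  have split: "(\<lambda>n. if n \<in> insert j S then a n else 0) = (\<lambda>n. (if n \<in> S then a n else 0) + lsingle j (a j) n)"
    using insert(2) by (auto simp: lsingle_def fun_eq_iff)
  have "\<delta> (\<lambda>n. if n \<in> insert j S then a n else 0)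
      = (\<lambda>n. \<delta> (\<lambda>n. if n \<in> S then a n else 0) n + \<delta> (lsingle j (a j)) n)"
    unfolding split by (rule der_add[OF restr]) (simp add: lsingle_AU aj)
  also have "\<dots> = (\<lambda>n. if n - d \<in> insert j S then coef \<delta> (n - d) (a (n - d)) else 0)"
  proof
    fix n
    have "\<delta> (lsingle j (a j)) n = (if n - d = j then coef \<delta> j (a j) else 0)"
      using der_lsingle[OF aj] by (auto simp: lsingle_def)
    then show "\<delta> (\<lambda>n. if n \<in> S then a n else 0) n + \<delta> (lsingle j (a j)) n =
      (if n - d \<in> insert j S then coef \<delta> (n - d) (a (n - d)) else 0)"
      unfolding fun_cong[OF insert.IH, of n] using insert(2) by auto
  qed
  finally show ?case .
qed

theorem DerA_decompose:
  "\<exists>\<alpha>. admissible (coef \<delta> 0) \<alpha> \<and> \<delta> = der_of (coef \<delta> 0) \<alpha>"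
proof (intro exI conjI)
  let ?\<alpha> = "ratio 1 + of_int (m 1) * (coef \<delta> 0 g / g)"
  show "admissible (coef \<delta> 0) ?\<alpha>"
    unfolding admissible_def
  proof (intro allI impI)
    fix k x assume x: "x \<in> A k"
    show "hom_part (coef \<delta> 0) ?\<alpha> k x \<in> A (k + d)"
      using coef_in_A[OF x] unfolding coef_hom_part[OF x] .
  qed
  show "\<delta> = der_of (coef \<delta> 0) ?\<alpha>"
  proof
    fix a
    show "\<delta> a = der_of (coef \<delta> 0) ?\<alpha> a"
    proof (cases "a \<in> AU B g p q")
      case True
      let ?S = "{n. a n \<noteq> 0}"
      have fin: "finite ?S" using True by (simp add: AU_iff)
      have a: "(\<lambda>n. if n \<in> ?S then a n else 0) = a" by auto
      have "\<delta> a = (\<lambda>n. if n - d \<in> ?S then coef \<delta> (n - d) (a (n - d)) else 0)"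
        using der_restrict[OF True fin] unfolding a .
      then show ?thesis
        using True by (auto simp: der_of_def fun_eq_iff coef_0 coef_hom_part AU_iff hom_part_0[OF is_der_coef])
    qed (simp add: der_outside der_of_def)
  qed
qed

end

section \<open>When is a pair admissible?\<close>

text \<open>The obstruction h_k(\<sigma>, \<alpha>) = (k \<alpha> - m(k) \<sigma>(g)/g) g^(m(k+d) - m(k)): hom_part applied
  to the generator of A_k lands in A_(k+d) iff h_k \<in> B.\<close>
definition obstr :: "('a \<Rightarrow> 'a) \<Rightarrow> 'a \<Rightarrow> int \<Rightarrow> 'a" where
  "obstr \<sigma> \<alpha> k = (of_int k * \<alpha> - of_int (m k) * (\<sigma> g / g)) * g powi (m (k + d) - m k)"

lemma gpow_jump_split: "g powi (m (k + d) - m k) = g powi m d * g powi (m (k + d) - m k - m d)"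
  unfolding gpow_add[symmetric] by simp

lemma jump_excess_nonneg: "0 \<le> m (k + d) - m k - m d"
  using flr_superadditive[OF q_pos, of p k d] by simp

lemma admissible_iff:
  assumes \<sigma>: "is_der \<sigma>"
  shows "admissible \<sigma> \<alpha> \<longleftrightarrow> (\<forall>b\<in>B. \<sigma> b * g powi m d \<in> B) \<and> (\<forall>k. obstr \<sigma> \<alpha> k \<in> B)"
proof
  assume adm: "admissible \<sigma> \<alpha>"
  have "\<sigma> b * g powi m d \<in> B" if b: "b \<in> B" for b
  proof -
    have "b \<in> A 0" using b by (simp add: A_zero_iff)
    then have "hom_part \<sigma> \<alpha> 0 b \<in> A (0 + d)" using adm unfolding admissible_def by blast
    then show ?thesis by (simp add: hom_part_zero_degree[OF \<sigma>] Osec_def)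
  qed
  moreover have "obstr \<sigma> \<alpha> k \<in> B" for k
  proof -
    have "hom_part \<sigma> \<alpha> k (gen k) * g powi m (k + d) \<in> B"
      using adm gen_in_A unfolding admissible_def Osec_def by blast
    then show ?thesis
      unfolding hom_part_gen[OF \<sigma>] gen_mult_gpow[symmetric] obstr_def by (simp only: ac_simps)
  qed
  ultimately show "(\<forall>b\<in>B. \<sigma> b * g powi m d \<in> B) \<and> (\<forall>k. obstr \<sigma> \<alpha> k \<in> B)" by blast
next
  assume "(\<forall>b\<in>B. \<sigma> b * g powi m d \<in> B) \<and> (\<forall>k. obstr \<sigma> \<alpha> k \<in> B)"
  then have \<sigma>B: "\<And>b. b \<in> B \<Longrightarrow> \<sigma> b * g powi m d \<in> B" and hB: "\<And>k. obstr \<sigma> \<alpha> k \<in> B" by auto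
  show "admissible \<sigma> \<alpha>"
    unfolding admissible_def
  proof (intro allI impI)
    fix k x assume x: "x \<in> A k"
    define X where "X = x * g powi m k"
    define \<epsilon> where "\<epsilon> = m (k + d) - m k - m d"
    have XB: "X \<in> B" using x by (simp add: X_def Osec_def)
    have xX: "x = X * gen k" using gen_gpow[of k] by (simp add: X_def ac_simps)
    have "hom_part \<sigma> \<alpha> k x * g powi m (k + d) = (\<sigma> X * g powi m d) * g powi \<epsilon> + X * obstr \<sigma> \<alpha> k"
      unfolding hom_part_def obstr_def X_def[symmetric] \<epsilon>_def
      using gen_mult_gpow[of k] gpow_jump_split[of k] xX by (simp add: algebra_simps)
    also have "\<dots> \<in> B"
      using B_add[OF B_mult[OF \<sigma>B[OF XB] B_gpow[OF jump_excess_nonneg]] B_mult[OF XB hB]]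
      unfolding \<epsilon>_def .
    finally show "hom_part \<sigma> \<alpha> k x \<in> A (k + d)" by (simp add: Osec_def)
  qed
qed

lemma admissible_zero_iff:
  "admissible (\<lambda>_. 0) f \<longleftrightarrow> (\<forall>k. of_int k * f * g powi (m (k + d) - m k) \<in> B)"
  by (simp add: admissible_iff[OF is_der_zero] obstr_def B_0)

text \<open>Elements of O_U(sV) always give admissible pairs (0, f), since the jump is at least m(d).\<close>
lemma admissible_zero_of_Osec:
  assumes f: "f \<in> Osec B g (m d)"
  shows "admissible (\<lambda>_. 0) f"
  unfolding admissible_zero_iff
proof
  fix k
  have "of_int k * f * g powi (m (k + d) - m k) = of_int k * (f * g powi m d) * g powi (m (k + d) - m k - m d)"
    unfolding gpow_jump_split by (simp add: ac_simps)
  also have "\<dots> \<in> B"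
    using f by (intro B_mult[OF B_mult[OF B_of_int] B_gpow[OF jump_excess_nonneg]]) (simp add: Osec_def)
  finally show "of_int k * f * g powi (m (k + d) - m k) \<in> B" .
qed

lemma untwist_DerB:
  assumes \<sigma>: "is_der \<sigma>" and adm: "admissible \<sigma> \<alpha>"
  shows "(\<lambda>x. if x \<in> B then g powi m d * \<sigma> x else 0) \<in> DerB kk B"
  unfolding DerB_iff
proof (intro conjI allI ballI impI)
  fix x assume "x \<in> B"
  then show "(if x \<in> B then g powi m d * \<sigma> x else 0) \<in> B"
    using adm admissible_iff[OF \<sigma>] by (simp add: ac_simps)
next
  show "is_der (\<lambda>x. if x \<in> B then g powi m d * \<sigma> x else 0)"
    unfolding is_der_def
  proof (intro conjI ballI)
    fix x y assume x: "x \<in> B" and y: "y \<in> B"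
    show "(if x + y \<in> B then g powi m d * \<sigma> (x + y) else 0) =
        (if x \<in> B then g powi m d * \<sigma> x else 0) + (if y \<in> B then g powi m d * \<sigma> y else 0)"
      using x y B_add[OF x y] is_der_add[OF \<sigma> x y] by (simp add: algebra_simps)
    show "(if x * y \<in> B then g powi m d * \<sigma> (x * y) else 0) =
        x * (if y \<in> B then g powi m d * \<sigma> y else 0) + (if x \<in> B then g powi m d * \<sigma> x else 0) * y"
      using x y B_mult[OF x y] is_der_mult[OF \<sigma> x y] by (simp add: algebra_simps)
  next
    fix c x assume c: "c \<in> kk" and x: "x \<in> B"
    show "(if c * x \<in> B then g powi m d * \<sigma> (c * x) else 0) = c * (if x \<in> B then g powi m d * \<sigma> x else 0)"
      using c x B_mult[OF _ x, of c] kk_sub_B is_der_scale[OF \<sigma> c x] by (auto simp: algebra_simps)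
  qed
qed simp

lemma untwist_DerLogB:
  assumes \<sigma>: "is_der \<sigma>" and adm: "admissible \<sigma> \<alpha>" and log: "\<sigma> g / g * g powi m d \<in> B"
  shows "(\<lambda>x. if x \<in> B then g powi m d * \<sigma> x else 0) \<in> DerLogB kk B g"
  unfolding DerLogB_def
proof (intro CollectI conjI ballI untwist_DerB[OF \<sigma> adm])
  fix x assume x: "x \<in> B"
  let ?c = "g powi m d * \<sigma> x + x * (\<sigma> g / g * g powi m d)"
  have "\<sigma> x * g powi m d \<in> B" using adm admissible_iff[OF \<sigma>] x by blast
  then have "?c \<in> B" using B_add[OF _ B_mult[OF x log]] by (simp add: ac_simps)
  moreover have "(if g * x \<in> B then g powi m d * \<sigma> (g * x) else 0) = g * ?c"
    using B_mult[OF g_in_B x] is_der_mult[OF \<sigma> g_in_B x] g_nonzero by (simp add: field_simps)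
  ultimately show "\<exists>c\<in>B. (if g * x \<in> B then g powi m d * \<sigma> (g * x) else 0) = g * c" by blast
qed

lemma DerLogB_admissible:
  assumes \<theta>: "\<theta> \<in> DerLogB kk B g"
  shows "admissible (\<lambda>x. g powi (- m d) * \<theta> x) 0"
proof -
  have \<theta>B: "\<theta> \<in> DerB kk B" using \<theta> by (simp add: DerLogB_def)
  obtain c where c: "c \<in> B" "\<theta> (g * 1) = g * c" using \<theta> g_in_B B_1 unfolding DerLogB_def by blast
  have gam: "g powi (- m d) * \<theta> g / g * g powi m d = c"
    using c gpow_inverse[of "m d"] g_nonzero by (simp add: field_simps)
  show ?thesis
    unfolding admissible_iff[OF is_der_twist[OF \<theta>B]]
  proof (intro conjI ballI allI)
    fix b assume "b \<in> B"
    then show "g powi (- m d) * \<theta> b * g powi m d \<in> B"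
      using \<theta>B gpow_inverse[of "m d"] by (simp add: DerB_def ac_simps)
  next
    fix k
    have "obstr (\<lambda>x. g powi (- m d) * \<theta> x) 0 k
       = - (of_int (m k) * (g powi (- m d) * \<theta> g / g * g powi m d) * g powi (m (k + d) - m k - m d))"
      unfolding obstr_def gpow_jump_split by (simp add: ac_simps)
    also have "\<dots> \<in> B"
      unfolding gam by (rule B_uminus[OF B_mult[OF B_mult[OF B_of_int c(1)] B_gpow[OF jump_excess_nonneg]]])
    finally show "obstr (\<lambda>x. g powi (- m d) * \<theta> x) 0 k \<in> B" .
  qed
qed

section \<open>An exactness criterion\<close>

lemma phiU_der_of: "phiU B g p q d f = der_of (\<lambda>_. 0) f"
  by (simp add: phiU_def der_of_def hom_part_def fun_eq_iff algebra_simps)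

lemma psiU_der_of: "psiU B d (der_of \<sigma> \<alpha>) = (\<lambda>b. if b \<in> B then \<sigma> b else 0)"
proof
  fix b
  show "psiU B d (der_of \<sigma> \<alpha>) b = (if b \<in> B then \<sigma> b else 0)"
  proof (cases "b \<in> B")
    case True
    then have "lsingle 0 b \<in> AU B g p q" by (simp add: lsingle_AU A_zero_iff)
    then show ?thesis
      using True gen_gpow[of 0] by (simp add: psiU_def der_of_def hom_part_def lsingle_def)
  qed (simp add: psiU_def)
qed

lemma psiU_coef: "psiU B d \<delta> = (\<lambda>b. if b \<in> B then coef \<delta> 0 b else 0)"
  by (simp add: psiU_def coef_def fun_eq_iff)

lemma phiU_inj: "inj_on (phiU B g p q d) M"
proof
  fix f f' assume "phiU B g p q d f = phiU B g p q d f'"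
  then have "phiU B g p q d f (lsingle 1 (gen 1)) (1 + d) = phiU B g p q d f' (lsingle 1 (gen 1)) (1 + d)"
    by simp
  then have "f * gen 1 = f' * gen 1"
    using gen_in_A[of 1] by (simp add: phiU_def lsingle_AU) (simp add: lsingle_def)
  then show "f = f'" using gen_nonzero[of 1] by simp
qed

lemma short_exact_criterion:
  fixes t :: int and M :: "('a \<Rightarrow> 'a) set"
  assumes M_sub: "M \<subseteq> DerB kk B"
    and kernel: "\<And>f. admissible (\<lambda>_. 0) f \<longleftrightarrow> f \<in> Osec B g t"
    and image: "\<And>\<sigma> \<alpha>. is_der \<sigma> \<Longrightarrow> admissible \<sigma> \<alpha> \<Longrightarrow> (\<lambda>x. if x \<in> B then g powi m d * \<sigma> x else 0) \<in> M"
    and lift: "\<And>\<theta>. \<theta> \<in> M \<Longrightarrow> \<exists>\<alpha>. admissible (\<lambda>x. g powi (- m d) * \<theta> x) \<alpha>"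
  shows "short_exact B (Osec B g t) (DerA kk B g p q d) (twist g (m d) M) (phiU B g p q d) (psiU B d)"
proof -
  have phi_in: "phiU B g p q d f \<in> DerA kk B g p q d" if "f \<in> Osec B g t" for f
    using der_of_DerA[OF is_der_zero] kernel that by (simp add: phiU_der_of)
  have psi_phi: "psiU B d (phiU B g p q d f) = (\<lambda>_. 0)" for f
    by (simp add: phiU_der_of psiU_der_of)
  have psi_in: "psiU B d \<delta> \<in> twist g (m d) M" if \<delta>: "\<delta> \<in> DerA kk B g p q d" for \<delta>
  proof -
    obtain \<alpha> where "admissible (coef \<delta> 0) \<alpha>" using DerA_decompose[OF \<delta>] by blast
    then have inM: "(\<lambda>x. if x \<in> B then g powi m d * coef \<delta> 0 x else 0) \<in> M"
      by (rule image[OF is_der_coef[OF \<delta>]])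
    have "psiU B d \<delta> = (\<lambda>x. g powi (- m d) * (if x \<in> B then g powi m d * coef \<delta> 0 x else 0))"
      unfolding psiU_coef using gpow_inverse[of "m d"] by (auto simp: fun_eq_iff mult.assoc[symmetric])
    then show ?thesis unfolding twist_def by (rule image_eqI[OF _ inM])
  qed
  have kernel_eq: "phiU B g p q d ` Osec B g t = {\<delta> \<in> DerA kk B g p q d. psiU B d \<delta> = (\<lambda>_. 0)}"
  proof (intro equalityI subsetI)
    fix \<delta> assume "\<delta> \<in> {\<delta> \<in> DerA kk B g p q d. psiU B d \<delta> = (\<lambda>_. 0)}"
    then have \<delta>: "\<delta> \<in> DerA kk B g p q d" and z: "psiU B d \<delta> = (\<lambda>_. 0)" by auto
    obtain \<alpha> where adm: "admissible (coef \<delta> 0) \<alpha>" and eq: "\<delta> = der_of (coef \<delta> 0) \<alpha>"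
      using DerA_decompose[OF \<delta>] by blast
    have zB: "\<And>b. b \<in> B \<Longrightarrow> coef \<delta> 0 b = 0" using z unfolding psiU_coef by (metis (mono_tags, lifting))
    have "\<delta> = phiU B g p q d \<alpha>"
      using eq der_of_cong[of "coef \<delta> 0" "\<lambda>_. 0" \<alpha>] zB by (simp add: phiU_der_of)
    moreover have "\<alpha> \<in> Osec B g t" using kernel admissible_cong[OF _ adm, of "\<lambda>_. 0"] zB by simp
    ultimately show "\<delta> \<in> phiU B g p q d ` Osec B g t" by blast
  qed (use phi_in psi_phi in auto)
  have image_eq: "psiU B d ` DerA kk B g p q d = twist g (m d) M"
  proof (intro equalityI subsetI)
    fix \<theta>' assume "\<theta>' \<in> twist g (m d) M"
    then obtain \<theta> where \<theta>: "\<theta> \<in> M" and \<theta>': "\<theta>' = (\<lambda>x. g powi (- m d) * \<theta> x)"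
      unfolding twist_def by auto
    obtain \<alpha> where adm: "admissible (\<lambda>x. g powi (- m d) * \<theta> x) \<alpha>" using lift[OF \<theta>] by blast
    have \<theta>B: "\<theta> \<in> DerB kk B" using \<theta> M_sub by auto
    have "der_of (\<lambda>x. g powi (- m d) * \<theta> x) \<alpha> \<in> DerA kk B g p q d"
      by (rule der_of_DerA[OF is_der_twist[OF \<theta>B] adm])
    moreover have "psiU B d (der_of (\<lambda>x. g powi (- m d) * \<theta> x) \<alpha>) = \<theta>'"
      unfolding psiU_der_of \<theta>' using \<theta>B by (auto simp: fun_eq_iff DerB_def)
    ultimately show "\<theta>' \<in> psiU B d ` DerA kk B g p q d" by blast
  qed (use psi_in in auto)
  show ?thesis
    unfolding short_exact_def
    using phi_in psi_in phiU_inj kernel_eq image_eq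
    by (simp add: phiU_def psiU_def fun_eq_iff algebra_simps)
qed

section \<open>The three cases\<close>

text \<open>At k = q the jump is m(d) and m(q) = p.\<close>
lemma obstr_at_q: "obstr \<sigma> \<alpha> q = (of_int q * \<alpha> - of_int p * (\<sigma> g / g)) * g powi m d"
  using flr_jump_dvd[OF q_pos, of q p d] flr_period[OF q_pos, of p] by (simp add: obstr_def)

text \<open>When p d \<equiv> -1 (mod q), the jump at every k not divisible by q is m(d) + 1.\<close>
lemma obstr_off_period:
  assumes pd: "p * d mod q = q - 1" and cop: "coprime p q" and k: "\<not> q dvd k"
  shows "obstr \<sigma> \<alpha> k = (of_int k * \<alpha> - of_int (m k) * (\<sigma> g / g)) * g powi m d * g"
  using flr_jump_carry[OF q_pos pd cop k] gpow_add[of "m d" 1] by (simp add: obstr_def)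

text \<open>Case p d \<equiv> -1 (mod q), char k \<nmid> q: 0 \<rightarrow> O_U(sV) \<rightarrow> (\<pi>_*\<Theta>_C)_d \<rightarrow> \<Theta>_U(sV) \<rightarrow> 0.
  Every \<theta> lifts, with \<alpha> = (p/q) \<theta>(g)/(g^(s+1)).\<close>
lemma exact_case_tame:
  assumes pd: "p * d mod q = q - 1" and cop: "coprime p q" and char: "\<not> int CHAR('a) dvd q"
  shows "short_exact B (Osec B g (m d)) (DerA kk B g p q d) (twist g (m d) (DerB kk B))
           (phiU B g p q d) (psiU B d)"
proof (rule short_exact_criterion)
  have q0: "(of_int q :: 'a) \<noteq> 0" using char by (simp add: of_int_eq_0_iff_char_dvd)
  show "admissible (\<lambda>_. 0) f \<longleftrightarrow> f \<in> Osec B g (m d)" for f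
  proof
    assume "admissible (\<lambda>_. 0) f"
    then have "obstr (\<lambda>_. 0) f q \<in> B" using admissible_iff[OF is_der_zero] by blast
    then have "inverse (of_int q) * (of_int q * f * g powi m d) \<in> B"
      by (intro B_mult[OF B_inverse_of_int]) (simp add: obstr_at_q)
    then show "f \<in> Osec B g (m d)" using q0 by (simp add: Osec_def field_simps)
  qed (rule admissible_zero_of_Osec)
  show "(\<lambda>x. if x \<in> B then g powi m d * \<sigma> x else 0) \<in> DerB kk B"
    if "is_der \<sigma>" and "admissible \<sigma> \<alpha>" for \<sigma> \<alpha>
    using untwist_DerB that .
  show "\<exists>\<alpha>. admissible (\<lambda>x. g powi (- m d) * \<theta> x) \<alpha>" if \<theta>: "\<theta> \<in> DerB kk B" for \<theta>
  proof
    let ?\<sigma> = "\<lambda>x. g powi (- m d) * \<theta> x"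
    let ?\<alpha> = "of_int p / of_int q * (?\<sigma> g / g)"
    show "admissible ?\<sigma> ?\<alpha>"
      unfolding admissible_iff[OF is_der_twist[OF \<theta>]]
    proof (intro conjI ballI allI)
      fix b assume "b \<in> B"
      then show "?\<sigma> b * g powi m d \<in> B"
        using \<theta> gpow_inverse[of "m d"] by (simp add: DerB_def ac_simps)
    next
      fix k
      show "obstr ?\<sigma> ?\<alpha> k \<in> B"
      proof (cases "q dvd k")
        case True
        have "(of_int (m k) :: 'a) * of_int q = of_int k * of_int p"
          using flr_multiple[OF q_pos True, of p] by (metis of_int_mult)
        have "of_int k * ?\<alpha> - of_int (m k) * (?\<sigma> g / g)
            = (of_int k * of_int p - of_int (m k) * of_int q) / of_int q * (?\<sigma> g / g)"
          using q0 g_nonzero by (simp add: field_simps)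
        then have "of_int k * ?\<alpha> - of_int (m k) * (?\<sigma> g / g) = 0"
          using \<open>of_int (m k) * of_int q = of_int k * of_int p\<close> by simp
        then show ?thesis by (simp add: obstr_def B_0)
      next
        case False
        have "obstr ?\<sigma> ?\<alpha> k = of_int (k * p - m k * q) * inverse (of_int q) * \<theta> g"
          unfolding obstr_off_period[OF pd cop False]
          using q0 g_nonzero gpow_inverse[of "m d"] by (simp add: field_simps)
        also have "\<dots> \<in> B" using \<theta> g_in_B by (intro B_mult B_of_int B_inverse_of_int) (simp add: DerB_def)
        finally show ?thesis .
      qed
    qed
  qed
qed (simp)

text \<open>Case p d \<equiv> -1 (mod q), char k | q: 0 \<rightarrow> O_U(sV + V) \<rightarrow> (\<pi>_*\<Theta>_C)_d \<rightarrow> Der_U(-log V)(sV) \<rightarrow> 0.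
  Now k \<alpha> vanishes for q | k, so \<alpha> may have an extra pole, while h_q forces p \<sigma>(g)/g \<in> g^(-s) B.\<close>
lemma exact_case_wild:
  assumes pd: "p * d mod q = q - 1" and cop: "coprime p q" and char: "int CHAR('a) dvd q"
  shows "short_exact B (Osec B g (m d + 1)) (DerA kk B g p q d) (twist g (m d) (DerLogB kk B g))
           (phiU B g p q d) (psiU B d)"
proof (rule short_exact_criterion)
  have q0: "(of_int q :: 'a) = 0" using char by (simp add: of_int_eq_0_iff_char_dvd)
  have p0: "(of_int p :: 'a) \<noteq> 0"
  proof
    assume "(of_int p :: 'a) = 0"
    then have "int CHAR('a) dvd gcd p q" using char by (simp add: of_int_eq_0_iff_char_dvd)
    then show False using cop by simp
  qed
  have q1: "\<not> q dvd 1"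
    using char dvd_trans[of "int CHAR('a)" q 1] by auto
  show "DerLogB kk B g \<subseteq> DerB kk B" by (auto simp: DerLogB_def)
  show "admissible (\<lambda>_. 0) f \<longleftrightarrow> f \<in> Osec B g (m d + 1)" for f
    unfolding admissible_zero_iff
  proof
    assume "\<forall>k. of_int k * f * g powi (m (k + d) - m k) \<in> B"
    then have "of_int 1 * f * g powi (m (1 + d) - m 1) \<in> B" by blast
    then show "f \<in> Osec B g (m d + 1)" using flr_jump_carry[OF q_pos pd cop q1] by (simp add: Osec_def)
  next
    assume f: "f \<in> Osec B g (m d + 1)"
    show "\<forall>k. of_int k * f * g powi (m (k + d) - m k) \<in> B"
    proof
      fix k
      show "of_int k * f * g powi (m (k + d) - m k) \<in> B"
      proof (cases "q dvd k")
        case True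
        then have "(of_int k :: 'a) = 0" using char by (metis dvd_trans of_int_eq_0_iff_char_dvd)
        then show ?thesis using B_0 by simp
      next
        case False
        then show ?thesis using f flr_jump_carry[OF q_pos pd cop False]
          by (simp add: Osec_def mult.assoc B_of_int B_mult)
      qed
    qed
  qed
  show "(\<lambda>x. if x \<in> B then g powi m d * \<sigma> x else 0) \<in> DerLogB kk B g"
    if \<sigma>: "is_der \<sigma>" and adm: "admissible \<sigma> \<alpha>" for \<sigma> \<alpha>
  proof (rule untwist_DerLogB[OF \<sigma> adm])
    have "obstr \<sigma> \<alpha> q = - (of_int p * (\<sigma> g / g * g powi m d))" using q0 by (simp add: obstr_at_q)
    moreover have "obstr \<sigma> \<alpha> q \<in> B" using adm admissible_iff[OF \<sigma>] by blast
    ultimately have "- (of_int p * (\<sigma> g / g * g powi m d)) \<in> B" by simp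
    then have "- inverse (of_int p) * - (of_int p * (\<sigma> g / g * g powi m d)) \<in> B"
      by (rule B_mult[OF B_uminus[OF B_inverse_of_int]])
    then show "\<sigma> g / g * g powi m d \<in> B" using p0 by (simp add: field_simps)
  qed
  show "\<exists>\<alpha>. admissible (\<lambda>x. g powi (- m d) * \<theta> x) \<alpha>" if "\<theta> \<in> DerLogB kk B g" for \<theta>
    using DerLogB_admissible that by blast
qed

text \<open>Case p d \<not>\<equiv> -1 (mod q): 0 \<rightarrow> O_U(sV) \<rightarrow> (\<pi>_*\<Theta>_C)_d \<rightarrow> Der_U(-log V)(sV) \<rightarrow> 0.
  The jump is m(d) both at q and at an inverse u of p mod q; since p u - m(u) q = 1, the
  conditions h_u, h_q \<in> B combine to \<alpha> g^s \<in> B (for \<sigma> = 0) and \<sigma>(g)/g g^s \<in> B.\<close>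
lemma exact_case_generic:
  assumes pd: "p * d mod q \<noteq> q - 1" and cop: "coprime p q"
  shows "short_exact B (Osec B g (m d)) (DerA kk B g p q d) (twist g (m d) (DerLogB kk B g))
           (phiU B g p q d) (psiU B d)"
proof (rule short_exact_criterion)
  have q1: "q \<noteq> 1" using pd by auto
  obtain u v where "u * p + v * q = 1"
    using bezout_int[of p q] cop by (auto simp: coprime_iff_gcd_eq_1)
  then have "p * u mod q = 1 mod q" by (metis add.commute mod_mult_self2 mult.commute)
  then have pu: "p * u mod q = 1" using q_pos q1 by simp
  have unit: "of_int p * of_int u - of_int (m u) * of_int q = (1 :: 'a)"
    using arg_cong[OF flr_inverse[OF pu], of "of_int :: int \<Rightarrow> 'a"] by simp
  have obstr_at_u: "obstr \<sigma> \<alpha> u = (of_int u * \<alpha> - of_int (m u) * (\<sigma> g / g)) * g powi m d" for \<sigma> \<alpha>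
    using flr_jump_inverse[OF q_pos pu pd] by (simp add: obstr_def)
  show "DerLogB kk B g \<subseteq> DerB kk B" by (auto simp: DerLogB_def)
  show "admissible (\<lambda>_. 0) f \<longleftrightarrow> f \<in> Osec B g (m d)" for f
  proof
    assume "admissible (\<lambda>_. 0) f"
    then have "obstr (\<lambda>_. 0) f u \<in> B" and "obstr (\<lambda>_. 0) f q \<in> B"
      using admissible_iff[OF is_der_zero] by blast+
    then have hu: "of_int u * f * g powi m d \<in> B" and hq: "of_int q * f * g powi m d \<in> B"
      by (simp_all add: obstr_at_u obstr_at_q)
    have "(of_int p * of_int u - of_int (m u) * of_int q) * (f * g powi m d)
        = of_int p * (of_int u * f * g powi m d) - of_int (m u) * (of_int q * f * g powi m d)"
      by (simp add: algebra_simps)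
    also have "\<dots> \<in> B" by (rule B_diff[OF B_mult[OF B_of_int hu] B_mult[OF B_of_int hq]])
    finally show "f \<in> Osec B g (m d)" unfolding unit by (simp add: Osec_def)
  qed (rule admissible_zero_of_Osec)
  show "(\<lambda>x. if x \<in> B then g powi m d * \<sigma> x else 0) \<in> DerLogB kk B g"
    if \<sigma>: "is_der \<sigma>" and adm: "admissible \<sigma> \<alpha>" for \<sigma> \<alpha>
  proof (rule untwist_DerLogB[OF \<sigma> adm])
    let ?\<gamma> = "\<sigma> g / g"
    have "obstr \<sigma> \<alpha> u \<in> B" and "obstr \<sigma> \<alpha> q \<in> B" using adm admissible_iff[OF \<sigma>] by blast+
    then have hu: "(of_int u * \<alpha> - of_int (m u) * ?\<gamma>) * g powi m d \<in> B"
      and hq: "(of_int q * \<alpha> - of_int p * ?\<gamma>) * g powi m d \<in> B"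
      by (simp_all only: obstr_at_u obstr_at_q)
    have "(of_int p * of_int u - of_int (m u) * of_int q) * (?\<gamma> * g powi m d)
        = of_int q * ((of_int u * \<alpha> - of_int (m u) * ?\<gamma>) * g powi m d)
          - of_int u * ((of_int q * \<alpha> - of_int p * ?\<gamma>) * g powi m d)"
      by (simp add: algebra_simps)
    also have "\<dots> \<in> B" by (rule B_diff[OF B_mult[OF B_of_int hu] B_mult[OF B_of_int hq]])
    finally show "?\<gamma> * g powi m d \<in> B" unfolding unit by simp
  qed
  show "\<exists>\<alpha>. admissible (\<lambda>x. g powi (- m d) * \<theta> x) \<alpha>" if "\<theta> \<in> DerLogB kk B g" for \<theta>
    using DerLogB_admissible that by blast
qed

end

theorem proposition4p3:
  fixes kk B :: "'a::field set" and g :: 'a and p q d s :: int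
  assumes "normal_affine_chart kk B"
    and "div_is_prime_divisor B g"
    and "coprime p q" and "q > 0"
    and "s = \<lfloor>(of_int (p * d) / of_int q :: rat)\<rfloor>"
  shows "((p * d) mod q = (- 1) mod q \<and> \<not> int CHAR('a) dvd q \<longrightarrow>
           short_exact B (Osec B g s) (DerA kk B g p q d) (twist g s (DerB kk B))
             (phiU B g p q d) (psiU B d))
       \<and> ((p * d) mod q = (- 1) mod q \<and> int CHAR('a) dvd q \<longrightarrow>
           short_exact B (Osec B g (s + 1)) (DerA kk B g p q d) (twist g s (DerLogB kk B g))
             (phiU B g p q d) (psiU B d))
       \<and> (\<not> (p * d) mod q = (- 1) mod q \<longrightarrow>
           short_exact B (Osec B g s) (DerA kk B g p q d) (twist g s (DerLogB kk B g))
             (phiU B g p q d) (psiU B d))"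
proof -
  interpret graded_chart kk B g p q d
    using assms(1,2,4) unfolding normal_affine_chart_def div_is_prime_divisor_def
    by unfold_locales auto
  have s: "s = m d" using assms(5) by (simp add: flr_def)
  have minus_one: "(- 1) mod q = q - 1" using minus_one_mod[OF assms(4)] .
  show ?thesis
    unfolding s minus_one
    using exact_case_tame exact_case_wild exact_case_generic assms(3) by blast
qed

end
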